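(* Let $L$ be a finite-dimensional Lie superalgebra over a field of characteristic different from $2,3$, and let $(T_1,\lambda_1)$ and $(T_2,\lambda_2)$ be two universal elements of $C(L)$. Then $T_1\cong T_2$.
   Context: Lie superalgebras: $\mathbb{Z}_2$-graded algebras with graded skew-symmetric bracket satisfying the graded Jacobi identity; $\mathrm{Hom}(K,L)$ denotes Lie superalgebra homomorphisms (even, bracket-preserving). $Z(K)$ is the center, $K'=[K,K]$. $C(L)$ is the class of pairs $(K,\lambda)$ with $K$ a Lie superalgebra and $\lambda\in\mathrm{Hom}(K,L)$ surjective with $\mathrm{Ker}(\lambda)\subseteq K'\cap Z(K)$. An element $(T,\sigma)\in C(L)$ is universal if for every $(K,\lambda)\in C(L)$ there exists $\tau\in\mathrm{Hom}(T,K)$ with $\lambda\circ\tau=\sigma$. *)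

theory Defs
  imports Main
begin

text \<open>A Lie superalgebra over a field 'k, represented by a carrier subset of an
  additive group type 'a (the vector addition and zero are those of the type),
  together with its even and odd parts, scalar multiplication and bracket.\<close>

record ('k, 'a) lsa =
  lcar :: "'a set"
  lev  :: "'a set"
  lod  :: "'a set"
  lsc  :: "'k \<Rightarrow> 'a \<Rightarrow> 'a"
  lbr  :: "'a \<Rightarrow> 'a \<Rightarrow> 'a"

definition grade :: "('k, 'a) lsa \<Rightarrow> nat \<Rightarrow> 'a set" where
  "grade K i = (if i = 0 then lev K else lod K)"

definition subspace_of :: "('k::field, 'a::ab_group_add) lsa \<Rightarrow> 'a set \<Rightarrow> bool" where
  "subspace_of K S \<longleftrightarrow> S \<subseteq> lcar K \<and> 0 \<in> S \<and>
     (\<forall>x\<in>S. \<forall>y\<in>S. x + y \<in> S) \<and> (\<forall>c. \<forall>x\<in>S. lsc K c x \<in> S)"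

definition lie_superalgebra :: "('k::field, 'a::ab_group_add) lsa \<Rightarrow> bool" where
  "lie_superalgebra K \<longleftrightarrow>
     \<comment> \<open>vector space over 'k\<close>
     subspace_of K (lcar K) \<and>
     (\<forall>c. \<forall>x\<in>lcar K. \<forall>y\<in>lcar K. lsc K c (x + y) = lsc K c x + lsc K c y) \<and>
     (\<forall>a b. \<forall>x\<in>lcar K. lsc K (a + b) x = lsc K a x + lsc K b x) \<and>
     (\<forall>a b. \<forall>x\<in>lcar K. lsc K (a * b) x = lsc K a (lsc K b x)) \<and>
     (\<forall>x\<in>lcar K. lsc K 1 x = x) \<and>
     \<comment> \<open>Z_2-grading: carrier = even (+) odd\<close>
     subspace_of K (lev K) \<and> subspace_of K (lod K) \<and>
     lev K \<inter> lod K = {0} \<and>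
     lcar K = {x + y | x y. x \<in> lev K \<and> y \<in> lod K} \<and>
     \<comment> \<open>bilinear bracket\<close>
     (\<forall>x\<in>lcar K. \<forall>y\<in>lcar K. lbr K x y \<in> lcar K) \<and>
     (\<forall>x\<in>lcar K. \<forall>y\<in>lcar K. \<forall>z\<in>lcar K. lbr K (x + y) z = lbr K x z + lbr K y z) \<and>
     (\<forall>x\<in>lcar K. \<forall>y\<in>lcar K. \<forall>z\<in>lcar K. lbr K x (y + z) = lbr K x y + lbr K x z) \<and>
     (\<forall>c. \<forall>x\<in>lcar K. \<forall>y\<in>lcar K. lbr K (lsc K c x) y = lsc K c (lbr K x y)) \<and>
     (\<forall>c. \<forall>x\<in>lcar K. \<forall>y\<in>lcar K. lbr K x (lsc K c y) = lsc K c (lbr K x y)) \<and>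
     \<comment> \<open>bracket respects the grading\<close>
     (\<forall>i<2. \<forall>j<2. \<forall>x\<in>grade K i. \<forall>y\<in>grade K j. lbr K x y \<in> grade K ((i + j) mod 2)) \<and>
     \<comment> \<open>graded skew-symmetry\<close>
     (\<forall>i<2. \<forall>j<2. \<forall>x\<in>grade K i. \<forall>y\<in>grade K j.
        lbr K x y = - lsc K ((-1) ^ (i * j)) (lbr K y x)) \<and>
     \<comment> \<open>graded Jacobi identity\<close>
     (\<forall>i<2. \<forall>j<2. \<forall>k<2. \<forall>x\<in>grade K i. \<forall>y\<in>grade K j. \<forall>z\<in>grade K k.
        lsc K ((-1) ^ (i * k)) (lbr K x (lbr K y z)) +
        lsc K ((-1) ^ (j * i)) (lbr K y (lbr K z x)) +
        lsc K ((-1) ^ (k * j)) (lbr K z (lbr K x y)) = 0)"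

definition fin_dim :: "('k::field, 'a::ab_group_add) lsa \<Rightarrow> bool" where
  "fin_dim K \<longleftrightarrow> (\<exists>S. finite S \<and> S \<subseteq> lcar K \<and>
      lcar K = {(\<Sum>v\<in>S. lsc K (c v) v) | c. True})"

definition lsa_hom :: "('k::field, 'a::ab_group_add) lsa \<Rightarrow> ('k, 'b::ab_group_add) lsa
    \<Rightarrow> ('a \<Rightarrow> 'b) \<Rightarrow> bool" where
  "lsa_hom K L f \<longleftrightarrow>
     f ` lcar K \<subseteq> lcar L \<and> f ` lev K \<subseteq> lev L \<and> f ` lod K \<subseteq> lod L \<and>
     (\<forall>x\<in>lcar K. \<forall>y\<in>lcar K. f (x + y) = f x + f y) \<and>
     (\<forall>c. \<forall>x\<in>lcar K. f (lsc K c x) = lsc L c (f x)) \<and>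
     (\<forall>x\<in>lcar K. \<forall>y\<in>lcar K. f (lbr K x y) = lbr L (f x) (f y))"

definition lsa_iso :: "('k::field, 'a::ab_group_add) lsa \<Rightarrow> ('k, 'b::ab_group_add) lsa \<Rightarrow> bool" where
  "lsa_iso K L \<longleftrightarrow> (\<exists>f. lsa_hom K L f \<and> bij_betw f (lcar K) (lcar L))"

definition center :: "('k::field, 'a::ab_group_add) lsa \<Rightarrow> 'a set" where
  "center K = {z \<in> lcar K. \<forall>x\<in>lcar K. lbr K z x = 0}"

definition derived :: "('k::field, 'a::ab_group_add) lsa \<Rightarrow> 'a set" where
  "derived K = {(\<Sum>i<n. lsc K (c i) (lbr K (a i) (b i))) | (n::nat) c a b.
                  \<forall>i<n. a i \<in> lcar K \<and> b i \<in> lcar K}"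

definition lsa_ker :: "('k, 'a::ab_group_add) lsa \<Rightarrow> ('a \<Rightarrow> 'b::zero) \<Rightarrow> 'a set" where
  "lsa_ker K f = {x \<in> lcar K. f x = 0}"

definition in_C :: "('k::field, 'l::ab_group_add) lsa \<Rightarrow> ('k, 'a::ab_group_add) lsa
    \<Rightarrow> ('a \<Rightarrow> 'l) \<Rightarrow> bool" where
  "in_C L K lam \<longleftrightarrow> lie_superalgebra K \<and> lsa_hom K L lam \<and> lam ` lcar K = lcar L \<and>
     lsa_ker K lam \<subseteq> derived K \<inter> center K"

text \<open>Universality of (T,sigma) in C(L), with respect to all (K,lambda) in C(L) whose
  Lie superalgebra K lives in the type 'c (HOL cannot quantify over types).\<close>
definition universal_wrt :: "'c::ab_group_add itself \<Rightarrow> ('k::field, 'l::ab_group_add) lsa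
    \<Rightarrow> ('k, 'a::ab_group_add) lsa \<Rightarrow> ('a \<Rightarrow> 'l) \<Rightarrow> bool" where
  "universal_wrt _ L T sig \<longleftrightarrow> in_C L T sig \<and>
     (\<forall>(K :: ('k, 'c) lsa) lam. in_C L K lam \<longrightarrow>
        (\<exists>tau. lsa_hom T K tau \<and> (\<forall>x\<in>lcar T. lam (tau x) = sig x)))"

end

theory Submission
  imports Defs
begin

text \<open>Universality in both directions yields morphisms \<open>\<tau> : T1 \<rightarrow> T2\<close> and
  \<open>\<rho> : T2 \<rightarrow> T1\<close> over \<open>L\<close>. A morphism over \<open>L\<close> between two members of \<open>C(L)\<close> is surjective:
  its image together with the central kernel of the target exhausts the target, so every
  bracket of the target is a bracket of image elements, hence the derived algebra, which
  contains the kernel, lies in the image. An endomorphism \<open>p\<close> over \<open>L\<close> of a member of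
  \<open>C(L)\<close> moves every element by a central one, so it fixes all brackets and thus the
  derived algebra; since the kernel of \<open>p\<close> lies in the derived algebra, \<open>p\<close> is injective.
  Applied to \<open>\<rho> \<circ> \<tau>\<close> this makes \<open>\<tau>\<close> injective.\<close>

lemma subspace_ofD:
  assumes "subspace_of K S"
  shows subspace_of_subset: "S \<subseteq> lcar K"
    and subspace_of_zero: "0 \<in> S"
    and subspace_of_add: "\<lbrakk>x \<in> S; y \<in> S\<rbrakk> \<Longrightarrow> x + y \<in> S"
    and subspace_of_scale: "x \<in> S \<Longrightarrow> lsc K c x \<in> S"
  using assms unfolding subspace_of_def by blast+

lemma lie_superalgebraD:
  assumes "lie_superalgebra K"
  shows "subspace_of K (lcar K)"
    and "\<forall>c. \<forall>x\<in>lcar K. \<forall>y\<in>lcar K. lsc K c (x + y) = lsc K c x + lsc K c y"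
    and "\<forall>a b. \<forall>x\<in>lcar K. lsc K (a + b) x = lsc K a x + lsc K b x"
    and "\<forall>x\<in>lcar K. lsc K 1 x = x"
    and "subspace_of K (lev K)" and "subspace_of K (lod K)"
    and "lev K \<inter> lod K = {0}"
    and "lcar K = {x + y | x y. x \<in> lev K \<and> y \<in> lod K}"
    and "\<forall>x\<in>lcar K. \<forall>y\<in>lcar K. lbr K x y \<in> lcar K"
    and "\<forall>x\<in>lcar K. \<forall>y\<in>lcar K. \<forall>z\<in>lcar K. lbr K (x + y) z = lbr K x z + lbr K y z"
    and "\<forall>x\<in>lcar K. \<forall>y\<in>lcar K. \<forall>z\<in>lcar K. lbr K x (y + z) = lbr K x y + lbr K x z"
    and "\<forall>i<2. \<forall>j<2. \<forall>x\<in>grade K i. \<forall>y\<in>grade K j. lbr K x y \<in> grade K ((i + j) mod 2)"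
    and "\<forall>i<2. \<forall>j<2. \<forall>x\<in>grade K i. \<forall>y\<in>grade K j.
      lbr K x y = - lsc K ((-1) ^ (i * j)) (lbr K y x)"
  by (insert assms[unfolded lie_superalgebra_def], (elim conjE, assumption)+)

lemmas lsa_carrier_subspace = lie_superalgebraD(1)
  and lsa_scale_add_right = lie_superalgebraD(2)[rule_format]
  and lsa_scale_add = lie_superalgebraD(3)[rule_format]
  and lsa_scale_one = lie_superalgebraD(4)[rule_format]
  and lsa_even_subspace = lie_superalgebraD(5)
  and lsa_odd_subspace = lie_superalgebraD(6)
  and lsa_even_odd_inter = lie_superalgebraD(7)
  and lsa_even_odd_decomp = lie_superalgebraD(8)
  and lsa_bracket_closed = lie_superalgebraD(9)[rule_format]
  and lsa_bracket_add_left = lie_superalgebraD(10)[rule_format]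
  and lsa_bracket_add_right = lie_superalgebraD(11)[rule_format]
  and lsa_bracket_grade = lie_superalgebraD(12)[rule_format]
  and lsa_bracket_skew = lie_superalgebraD(13)[rule_format]

lemma grade_simps [simp]: "grade K 0 = lev K" "grade K 1 = lod K" "grade K (Suc 0) = lod K"
  by (simp_all add: grade_def)

lemma lsa_zero: "lie_superalgebra K \<Longrightarrow> 0 \<in> lcar K"
  by (rule subspace_of_zero[OF lsa_carrier_subspace])

lemma lsa_add: "\<lbrakk>lie_superalgebra K; x \<in> lcar K; y \<in> lcar K\<rbrakk> \<Longrightarrow> x + y \<in> lcar K"
  by (rule subspace_of_add[OF lsa_carrier_subspace])

lemma lsa_scale: "\<lbrakk>lie_superalgebra K; x \<in> lcar K\<rbrakk> \<Longrightarrow> lsc K c x \<in> lcar K"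
  by (rule subspace_of_scale[OF lsa_carrier_subspace])

lemma lsa_even_subset: "lie_superalgebra K \<Longrightarrow> lev K \<subseteq> lcar K"
  by (rule subspace_of_subset[OF lsa_even_subspace])

lemma lsa_odd_subset: "lie_superalgebra K \<Longrightarrow> lod K \<subseteq> lcar K"
  by (rule subspace_of_subset[OF lsa_odd_subspace])

lemma lsa_scale_zero_right:
  assumes "lie_superalgebra K"
  shows "lsc K c 0 = 0"
proof -
  have "lsc K c (0 + 0) = lsc K c 0 + lsc K c 0"
    using lsa_scale_add_right[OF assms] lsa_zero[OF assms] by blast
  then show ?thesis by simp
qed

lemma lsa_scale_minus_one:
  assumes K: "lie_superalgebra K" and x: "x \<in> lcar K"
  shows "lsc K (-1) x = - x"
proof -
  have "lsc K 0 x = lsc K 0 x + lsc K 0 x"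
    using lsa_scale_add[OF K x, of 0 0] by simp
  then have "lsc K 0 x = 0" by simp
  moreover have "lsc K (-1 + 1) x = lsc K (-1) x + x"
    using lsa_scale_add[OF K x, of "-1" 1] lsa_scale_one[OF K x] by simp
  ultimately have "lsc K (-1) x + x = 0" by simp
  then show ?thesis by (simp add: eq_neg_iff_add_eq_0)
qed

lemma subspace_of_uminus:
  assumes K: "lie_superalgebra K" and S: "subspace_of K S" and x: "x \<in> S"
  shows "- x \<in> S"
  using subspace_of_scale[OF S x, of "-1"] subspace_of_subset[OF S] x
    lsa_scale_minus_one[OF K] by auto

lemma lsa_diff:
  assumes K: "lie_superalgebra K" and x: "x \<in> lcar K" and y: "y \<in> lcar K"
  shows "x - y \<in> lcar K"
  using lsa_add[OF K x subspace_of_uminus[OF K lsa_carrier_subspace[OF K] y]] by simp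

lemma lsa_even_odd_sum_zero:
  assumes K: "lie_superalgebra K" and a: "a \<in> lev K" and b: "b \<in> lod K" and "a + b = 0"
  shows "a = 0" and "b = 0"
proof -
  have "a = - b" using \<open>a + b = 0\<close> by (simp add: eq_neg_iff_add_eq_0)
  then have "a \<in> lod K" using subspace_of_uminus[OF K lsa_odd_subspace[OF K] b] by simp
  then show "a = 0" using a lsa_even_odd_inter[OF K] by blast
  then show "b = 0" using \<open>a + b = 0\<close> by simp
qed

lemma lsa_bracket_zero_swap:
  assumes K: "lie_superalgebra K" and "i < 2" "j < 2" "x \<in> grade K i" "y \<in> grade K j"
    and "lbr K y x = 0"
  shows "lbr K x y = 0"
  using lsa_bracket_skew[OF K assms(2-5)] assms(6) lsa_scale_zero_right[OF K] by simp

lemma lsa_homD: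
  assumes "lsa_hom K L f"
  shows lsa_hom_closed: "x \<in> lcar K \<Longrightarrow> f x \<in> lcar L"
    and lsa_hom_add: "\<lbrakk>x \<in> lcar K; y \<in> lcar K\<rbrakk> \<Longrightarrow> f (x + y) = f x + f y"
    and lsa_hom_scale: "x \<in> lcar K \<Longrightarrow> f (lsc K c x) = lsc L c (f x)"
    and lsa_hom_bracket: "\<lbrakk>x \<in> lcar K; y \<in> lcar K\<rbrakk> \<Longrightarrow> f (lbr K x y) = lbr L (f x) (f y)"
  using assms unfolding lsa_hom_def by blast+

lemma lsa_hom_comp: "\<lbrakk>lsa_hom K M f; lsa_hom M N g\<rbrakk> \<Longrightarrow> lsa_hom K N (g \<circ> f)"
  unfolding lsa_hom_def by (auto simp: image_subset_iff)

lemma lsa_hom_zero: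
  assumes "lie_superalgebra K" and "lsa_hom K L f"
  shows "f 0 = 0"
  using lsa_hom_add[OF assms(2) lsa_zero[OF assms(1)] lsa_zero[OF assms(1)]] by simp

lemma lsa_hom_diff:
  assumes K: "lie_superalgebra K" and f: "lsa_hom K L f" and x: "x \<in> lcar K" and y: "y \<in> lcar K"
  shows "f (x - y) = f x - f y"
  using lsa_hom_add[OF f lsa_diff[OF K x y] y] by (simp add: eq_diff_eq)

lemma lsa_ker_diff:
  assumes K: "lie_superalgebra K" and f: "lsa_hom K L f" and x: "x \<in> lcar K" and y: "y \<in> lcar K"
    and "f x = f y"
  shows "x - y \<in> lsa_ker K f"
  using lsa_diff[OF K x y] lsa_hom_diff[OF K f x y] \<open>f x = f y\<close> unfolding lsa_ker_def by simp

lemma subspace_of_hom_image: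
  assumes K: "lie_superalgebra K" and f: "lsa_hom K M f"
  shows "subspace_of M (f ` lcar K)"
  unfolding subspace_of_def
proof (intro conjI ballI allI)
  show "f ` lcar K \<subseteq> lcar M" using lsa_hom_closed[OF f] by blast
  have "0 = f 0" using lsa_hom_zero[OF K f] by simp
  then show "0 \<in> f ` lcar K" using lsa_zero[OF K] by blast
next
  fix u v assume "u \<in> f ` lcar K" "v \<in> f ` lcar K"
  then obtain x y where x: "x \<in> lcar K" and y: "y \<in> lcar K" and "u = f x" "v = f y" by blast
  then have "u + v = f (x + y)" using lsa_hom_add[OF f x y] by simp
  then show "u + v \<in> f ` lcar K" using lsa_add[OF K x y] by blast
next
  fix c u assume "u \<in> f ` lcar K"
  then obtain x where x: "x \<in> lcar K" and "u = f x" by blast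
  then have "lsc M c u = f (lsc K c x)" using lsa_hom_scale[OF f x] by simp
  then show "lsc M c u \<in> f ` lcar K" using lsa_scale[OF K x] by blast
qed

lemma subspace_of_fixed_points:
  assumes K: "lie_superalgebra K" and p: "lsa_hom K K p"
  shows "subspace_of K {x \<in> lcar K. p x = x}"
  unfolding subspace_of_def
proof (intro conjI ballI allI)
  show "0 \<in> {x \<in> lcar K. p x = x}" using lsa_zero[OF K] lsa_hom_zero[OF K p] by simp
next
  fix x y assume "x \<in> {x \<in> lcar K. p x = x}" "y \<in> {x \<in> lcar K. p x = x}"
  then show "x + y \<in> {x \<in> lcar K. p x = x}" using lsa_add[OF K] lsa_hom_add[OF p] by simp
next
  fix c x assume "x \<in> {x \<in> lcar K. p x = x}"
  then show "lsc K c x \<in> {x \<in> lcar K. p x = x}" using lsa_scale[OF K] lsa_hom_scale[OF p] by simp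
qed blast

lemma derived_subset:
  assumes S: "subspace_of K S" and brackets: "\<And>x y. \<lbrakk>x \<in> lcar K; y \<in> lcar K\<rbrakk> \<Longrightarrow> lbr K x y \<in> S"
  shows "derived K \<subseteq> S"
proof
  fix x assume "x \<in> derived K"
  then obtain n :: nat and c a b where x: "x = (\<Sum>i<n. lsc K (c i) (lbr K (a i) (b i)))"
    and ab: "\<forall>i<n. a i \<in> lcar K \<and> b i \<in> lcar K"
    unfolding derived_def by blast
  have "(\<Sum>i<m. lsc K (c i) (lbr K (a i) (b i))) \<in> S" if "m \<le> n" for m
    using that
  proof (induction m)
    case 0
    then show ?case using subspace_of_zero[OF S] by simp
  next
    case (Suc m)
    then have m: "m < n" by simp
    then have "lsc K (c m) (lbr K (a m) (b m)) \<in> S"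
      using ab brackets subspace_of_scale[OF S] by blast
    moreover have "(\<Sum>i<m. lsc K (c i) (lbr K (a i) (b i))) \<in> S" using Suc.IH m by simp
    ultimately show ?case using subspace_of_add[OF S] by simp
  qed
  then show "x \<in> S" using x by simp
qed

text \<open>\<^const>\<open>center\<close> only asks \<open>[z, x] = 0\<close>; vanishing of \<open>[x, z]\<close> needs graded
  skew-symmetry, and hence a decomposition into homogeneous parts.\<close>

lemma lsa_center_bracket_homogeneous:
  assumes K: "lie_superalgebra K" and z: "z \<in> center K" and i: "i < 2" and w: "w \<in> grade K i"
  shows "lbr K w z = 0"
proof -
  obtain z0 z1 where zdec: "z = z0 + z1" and z0: "z0 \<in> lev K" and z1: "z1 \<in> lod K"
    using z lsa_even_odd_decomp[OF K] unfolding center_def by blast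
  have zc: "z0 \<in> lcar K" "z1 \<in> lcar K"
    using z0 z1 lsa_even_subset[OF K] lsa_odd_subset[OF K] by auto
  have wc: "w \<in> lcar K"
    using w lsa_even_subset[OF K] lsa_odd_subset[OF K] unfolding grade_def by (auto split: if_splits)
  have sum: "lbr K z0 w + lbr K z1 w = 0"
    using z wc lsa_bracket_add_left[OF K zc wc] zdec unfolding center_def by simp
  have g0: "lbr K z0 w \<in> grade K i"
    using lsa_bracket_grade[OF K, of 0 i z0 w] z0 w i by simp
  have g1: "lbr K z1 w \<in> grade K ((1 + i) mod 2)"
    using lsa_bracket_grade[OF K, of 1 i z1 w] z1 w i by simp
  \<comment> \<open>the two brackets have opposite parity, so both vanish\<close>
  have "lbr K z0 w = 0 \<and> lbr K z1 w = 0"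
  proof (cases "i = 0")
    case True
    with g0 g1 have "lbr K z0 w \<in> lev K" "lbr K z1 w \<in> lod K" by simp_all
    then show ?thesis using lsa_even_odd_sum_zero[OF K _ _ sum] by blast
  next
    case False
    with i have "i = 1" by simp
    with g0 g1 have "lbr K z0 w \<in> lod K" "lbr K z1 w \<in> lev K" by simp_all
    moreover have "lbr K z1 w + lbr K z0 w = 0" using sum by (simp add: add.commute)
    ultimately show ?thesis using lsa_even_odd_sum_zero[OF K] by blast
  qed
  then have "lbr K w z0 = 0" "lbr K w z1 = 0"
    using lsa_bracket_zero_swap[OF K i, of 0 w z0] lsa_bracket_zero_swap[OF K i, of 1 w z1]
      w z0 z1 by simp_all
  then show ?thesis using lsa_bracket_add_right[OF K wc zc] zdec by simp
qed

lemma lsa_center_bracket: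
  assumes K: "lie_superalgebra K" and z: "z \<in> center K" and x: "x \<in> lcar K"
  shows "lbr K x z = 0"
proof -
  obtain x0 x1 where xdec: "x = x0 + x1" and x0: "x0 \<in> lev K" and x1: "x1 \<in> lod K"
    using x lsa_even_odd_decomp[OF K] by blast
  have "x0 \<in> lcar K" "x1 \<in> lcar K" "z \<in> lcar K"
    using x0 x1 z lsa_even_subset[OF K] lsa_odd_subset[OF K] unfolding center_def by auto
  then have "lbr K x z = lbr K x0 z + lbr K x1 z"
    using lsa_bracket_add_left[OF K] xdec by simp
  also have "\<dots> = 0"
    using lsa_center_bracket_homogeneous[OF K z, of 0 x0] lsa_center_bracket_homogeneous[OF K z, of 1 x1]
      x0 x1 by simp
  finally show ?thesis .
qed

lemma lsa_bracket_add_center: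
  assumes K: "lie_superalgebra K" and x: "x \<in> lcar K" and y: "y \<in> lcar K"
    and z: "z \<in> center K" and z': "z' \<in> center K"
  shows "lbr K (x + z) (y + z') = lbr K x y"
proof -
  have zc: "z \<in> lcar K" "z' \<in> lcar K" using z z' unfolding center_def by auto
  have "lbr K (x + z) (y + z') = lbr K x y + lbr K x z' + lbr K z (y + z')"
    using lsa_bracket_add_left[OF K x zc(1) lsa_add[OF K y zc(2)]]
      lsa_bracket_add_right[OF K x y zc(2)] by simp
  also have "\<dots> = lbr K x y"
    using lsa_center_bracket[OF K z' x] z lsa_add[OF K y zc(2)] unfolding center_def by simp
  finally show ?thesis .
qed

lemma in_C_endomorphism_inj_on:
  assumes C: "in_C L K lam" and p: "lsa_hom K K p" and over: "\<And>x. x \<in> lcar K \<Longrightarrow> lam (p x) = lam x"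
  shows "inj_on p (lcar K)"
proof -
  have K: "lie_superalgebra K" and lam: "lsa_hom K L lam"
    and ker: "lsa_ker K lam \<subseteq> derived K \<inter> center K"
    using C unfolding in_C_def by auto
  have moves_central: "p x - x \<in> center K" if x: "x \<in> lcar K" for x
    using lsa_ker_diff[OF K lam lsa_hom_closed[OF p x] x over[OF x]] ker by blast
  have "p (lbr K x y) = lbr K x y" if x: "x \<in> lcar K" and y: "y \<in> lcar K" for x y
    using lsa_hom_bracket[OF p x y] lsa_bracket_add_center[OF K x y moves_central[OF x] moves_central[OF y]]
    by simp
  then have fixes_derived: "derived K \<subseteq> {x \<in> lcar K. p x = x}"
    using derived_subset[OF subspace_of_fixed_points[OF K p]] lsa_bracket_closed[OF K] by blast
  show ?thesis
  proof (rule inj_onI)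
    fix x y assume x: "x \<in> lcar K" and y: "y \<in> lcar K" and "p x = p y"
    then have "p (x - y) = 0" using lsa_hom_diff[OF K p x y] by simp
    moreover have "x - y \<in> lsa_ker K lam"
      using lsa_ker_diff[OF K lam x y] over x y \<open>p x = p y\<close> by metis
    ultimately show "x = y" using ker fixes_derived by auto
  qed
qed

lemma in_C_morphism_surj:
  assumes C1: "in_C L K1 lam1" and C2: "in_C L K2 lam2" and t: "lsa_hom K1 K2 t"
    and over: "\<And>x. x \<in> lcar K1 \<Longrightarrow> lam2 (t x) = lam1 x"
  shows "t ` lcar K1 = lcar K2"
proof -
  have K1: "lie_superalgebra K1" and surj1: "lam1 ` lcar K1 = lcar L"
    using C1 unfolding in_C_def by auto
  have K2: "lie_superalgebra K2" and lam2: "lsa_hom K2 L lam2"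
    and ker: "lsa_ker K2 lam2 \<subseteq> derived K2 \<inter> center K2"
    using C2 unfolding in_C_def by auto
  have lift: "\<exists>x\<in>lcar K1. y - t x \<in> lsa_ker K2 lam2" if y: "y \<in> lcar K2" for y
  proof -
    obtain x where x: "x \<in> lcar K1" and "lam2 y = lam1 x"
      using lsa_hom_closed[OF lam2 y] surj1 by (metis imageE)
    then show ?thesis using lsa_ker_diff[OF K2 lam2 y lsa_hom_closed[OF t x]] over by metis
  qed
  have "lbr K2 y1 y2 \<in> t ` lcar K1" if y1: "y1 \<in> lcar K2" and y2: "y2 \<in> lcar K2" for y1 y2
  proof -
    obtain x1 x2 where x: "x1 \<in> lcar K1" "x2 \<in> lcar K1"
      and z: "y1 - t x1 \<in> center K2" "y2 - t x2 \<in> center K2"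
      using lift[OF y1] lift[OF y2] ker by blast
    have "lbr K2 y1 y2 = lbr K2 (t x1 + (y1 - t x1)) (t x2 + (y2 - t x2))" by simp
    also have "\<dots> = t (lbr K1 x1 x2)"
      using lsa_bracket_add_center[OF K2 lsa_hom_closed[OF t x(1)] lsa_hom_closed[OF t x(2)] z]
        lsa_hom_bracket[OF t x] by simp
    finally show ?thesis using lsa_bracket_closed[OF K1 x] by blast
  qed
  then have derived_image: "derived K2 \<subseteq> t ` lcar K1"
    using derived_subset[OF subspace_of_hom_image[OF K1 t]] by blast
  show ?thesis
  proof
    show "t ` lcar K1 \<subseteq> lcar K2" using lsa_hom_closed[OF t] by blast
  next
    show "lcar K2 \<subseteq> t ` lcar K1"
    proof
      fix y assume y: "y \<in> lcar K2"
      then obtain x where x: "x \<in> lcar K1" and "y - t x \<in> t ` lcar K1"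
        using lift derived_image ker by blast
      then obtain w where w: "w \<in> lcar K1" and "y - t x = t w" by blast
      then have "y = t (x + w)" using lsa_hom_add[OF t x w] by (simp add: algebra_simps)
      then show "y \<in> t ` lcar K1" using lsa_add[OF K1 x w] by blast
    qed
  qed
qed

theorem theorem4p6:
  fixes L :: "('k::field, 'l::ab_group_add) lsa"
    and T1 :: "('k, 'a::ab_group_add) lsa" and sig1 :: "'a \<Rightarrow> 'l"
    and T2 :: "('k, 'b::ab_group_add) lsa" and sig2 :: "'b \<Rightarrow> 'l"
  assumes "lie_superalgebra L" and "fin_dim L"
    and "(2::'k) \<noteq> 0" and "(3::'k) \<noteq> 0"
    and "universal_wrt TYPE('a) L T1 sig1" and "universal_wrt TYPE('b) L T1 sig1"
    and "universal_wrt TYPE('l) L T1 sig1"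
    and "universal_wrt TYPE('a) L T2 sig2" and "universal_wrt TYPE('b) L T2 sig2"
    and "universal_wrt TYPE('l) L T2 sig2"
  shows "lsa_iso T1 T2"
proof -
  have C1: "in_C L T1 sig1" and C2: "in_C L T2 sig2"
    using assms(5,8) unfolding universal_wrt_def by auto
  obtain tau where tau: "lsa_hom T1 T2 tau" and tau_over: "\<And>x. x \<in> lcar T1 \<Longrightarrow> sig2 (tau x) = sig1 x"
    using assms(6) C2 unfolding universal_wrt_def by blast
  obtain rho where rho: "lsa_hom T2 T1 rho" and rho_over: "\<And>x. x \<in> lcar T2 \<Longrightarrow> sig1 (rho x) = sig2 x"
    using assms(8) C1 unfolding universal_wrt_def by blast
  have "\<And>x. x \<in> lcar T1 \<Longrightarrow> sig1 ((rho \<circ> tau) x) = sig1 x"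
    using tau_over rho_over lsa_hom_closed[OF tau] by simp
  then have "inj_on (rho \<circ> tau) (lcar T1)"
    by (rule in_C_endomorphism_inj_on[OF C1 lsa_hom_comp[OF tau rho]])
  then have "inj_on tau (lcar T1)" by (rule inj_on_imageI2)
  moreover have "tau ` lcar T1 = lcar T2" using in_C_morphism_surj[OF C1 C2 tau tau_over] .
  ultimately show ?thesis unfolding lsa_iso_def bij_betw_def using tau by blast
qed

end
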